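(* Let $q,n,h,t$ be positive integers with $h\le n$, and suppose $t+1$ divides $q$. For $j\in\{0,1,\dots,t\}$ let $$\mathcal C_q^{(j)}(n;t)=\Big\{\mathbf x\in[q]^n:\ \sum_{i=1}^n x_i\equiv j\pmod{t+1}\Big\}.$$ Then for every $j\in\{0,1,\dots,t\}$, $\mathcal C_q^{(j)}(n;t)$ is an optimal $(\cdot,h,t)$-AED code in $[q]^n$ (i.e., it is $(\cdot,h,t)$-AED and has the largest cardinality among all $(\cdot,h,t)$-AED codes in $[q]^n$), and $|\mathcal C_q^{(j)}(n;t)|=\frac{q^n}{t+1}$.
   Context: $[q]=\{0,1,\dots,q-1\}$. Channel over $[q]$ with $(\cdot,h,t)$-asymmetric errors: an input $\mathbf x\in[q]^n$ can produce any output $\mathbf y\in[q]^n$ satisfying $y_i\ge x_i$ for all $i$, $\sum_{i=1}^n\mathbb 1_{\{y_i\ne x_i\}}\le h$, and $\sum_{i=1}^n(y_i-x_i)\le t$ (no separate bound on the amplitude $y_i-x_i$). $\mathrm{Out}(\mathbf x)$ denotes the set of all such outputs. A code $\mathcal C\subseteq[q]^n$ is $(\cdot,h,t)$-AED if for all $\mathbf x\in\mathcal C$ and $\mathbf y\in\mathrm{Out}(\mathbf x)$ with $\mathbf y\ne\mathbf x$, we have $\mathbf y\notin\mathcal C$. *)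

theory Defs
  imports Complex_Main
begin

text \<open>Words in [q]^n are represented as functions nat => nat, with entries at
positions 0..n-1 below q and value 0 at every position >= n.\<close>

definition words :: "nat \<Rightarrow> nat \<Rightarrow> (nat \<Rightarrow> nat) set" where
  "words q n = {x. (\<forall>i<n. x i < q) \<and> (\<forall>i\<ge>n. x i = 0)}"

definition Out :: "nat \<Rightarrow> nat \<Rightarrow> nat \<Rightarrow> nat \<Rightarrow> (nat \<Rightarrow> nat) \<Rightarrow> (nat \<Rightarrow> nat) set" where
  "Out q n h t x = {y \<in> words q n. (\<forall>i<n. x i \<le> y i)
       \<and> card {i. i < n \<and> y i \<noteq> x i} \<le> h
       \<and> (\<Sum>i<n. y i - x i) \<le> t}"

definition AED :: "nat \<Rightarrow> nat \<Rightarrow> nat \<Rightarrow> nat \<Rightarrow> (nat \<Rightarrow> nat) set \<Rightarrow> bool" where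
  "AED q n h t C \<longleftrightarrow> C \<subseteq> words q n \<and>
     (\<forall>x\<in>C. \<forall>y\<in>Out q n h t x. y \<noteq> x \<longrightarrow> y \<notin> C)"

definition optimal_AED :: "nat \<Rightarrow> nat \<Rightarrow> nat \<Rightarrow> nat \<Rightarrow> (nat \<Rightarrow> nat) set \<Rightarrow> bool" where
  "optimal_AED q n h t C \<longleftrightarrow> AED q n h t C \<and>
     (\<forall>D. AED q n h t D \<longrightarrow> card D \<le> card C)"

definition sum_code :: "nat \<Rightarrow> nat \<Rightarrow> nat \<Rightarrow> nat \<Rightarrow> (nat \<Rightarrow> nat) set" where
  "sum_code q n t j = {x \<in> words q n. (\<Sum>i<n. x i) mod (t + 1) = j}"

end

theory Submission
  imports Defs "HOL-Library.FuncSet"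
begin

text \<open>An output of the channel raises the coordinate sum by at least 1 and at most t, so it
never lands in the same residue class mod t+1: every code C(j) is AED.
Conversely, round the first coordinate of each word down to a multiple of t+1. Two distinct
words with the same rounding differ in one coordinate by at most t, so one is an output of
the other; hence rounding is injective on any AED code, which therefore has at most as many
words as there are rounded words. Rounding is also a bijection from each C(j) onto the rounded
words, because the residue j of the sum pins down the discarded remainder. So all t+1 codes
C(j) have this optimal size, and since they partition [q]^n it equals q^n/(t+1).\<close>

lemma le_add_if_div_eq:
  fixes a b t :: nat
  assumes "a div (t + 1) = b div (t + 1)"
  shows "b \<le> a + t"
proof -
  have "b = b div (t + 1) * (t + 1) + b mod (t + 1)" by (rule div_mult_mod_eq[symmetric])
  moreover have "a = b div (t + 1) * (t + 1) + a mod (t + 1)" using assms by (metis div_mult_mod_eq)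
  moreover have "b mod (t + 1) \<le> t" using mod_less_divisor[of "t + 1" b] by linarith
  ultimately show ?thesis by linarith
qed

lemma mod_add_complement:
  fixes a j m :: nat
  assumes "j < m"
  shows "(a + (j + m - a mod m) mod m) mod m = j"
proof -
  have "a + (j + m - a mod m) = (a div m + 1) * m + j"
    using mod_less_divisor[of m a] assms mult_div_mod_eq[of m a] by (simp only: algebra_simps) linarith
  then show ?thesis using assms by (metis mod_add_right_eq mod_mult_self3 mod_less)
qed

lemma add_less_if_dvd:
  fixes a q m r :: nat
  assumes "m dvd a" "m dvd q" "a < q" "r < m"
  shows "a + r < q"
proof -
  have "m \<le> q - a" using assms by (intro dvd_imp_le dvd_diff_nat) auto
  then show ?thesis using assms by linarith
qed

lemma div_add_less_if_dvd:
  fixes a m r :: nat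
  assumes "m dvd a" "r < m"
  shows "(a + r) div m = a div m"
proof -
  obtain k where "a = m * k" using assms(1) by (rule dvdE)
  then show ?thesis using assms(2) by (simp add: add.commute[of _ r] mult.commute[of m])
qed

lemma bij_betw_restrict_words:
  "bij_betw (\<lambda>x. restrict x {..<n}) (words q n) ({..<n} \<rightarrow>\<^sub>E {..<q})"
proof (rule bij_betw_byWitness[where f' = "\<lambda>y i. if i < n then y i else 0"])
  show "\<forall>x\<in>words q n. (\<lambda>i. if i < n then restrict x {..<n} i else 0) = x"
    by (auto simp: words_def fun_eq_iff)
  show "\<forall>y\<in>{..<n} \<rightarrow>\<^sub>E {..<q}. restrict (\<lambda>i. if i < n then y i else 0) {..<n} = y"
    by (auto simp: PiE_def extensional_def fun_eq_iff)
  show "(\<lambda>x. restrict x {..<n}) ` words q n \<subseteq> {..<n} \<rightarrow>\<^sub>E {..<q}"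
    by (auto simp: words_def PiE_iff split: if_split_asm)
  show "(\<lambda>y i. if i < n then y i else 0) ` ({..<n} \<rightarrow>\<^sub>E {..<q}) \<subseteq> words q n"
    by (auto simp: words_def PiE_def Pi_def)
qed

lemma card_words: "card (words q n) = q ^ n"
  using bij_betw_same_card[OF bij_betw_restrict_words] by (simp add: card_PiE)

lemma finite_words: "finite (words q n)"
  using bij_betw_finite[OF bij_betw_restrict_words] by (simp add: finite_PiE)

lemma words_eq_outside:
  assumes "x \<in> words q n" "y \<in> words q n" "\<not> i < n"
  shows "x i = y i"
  using assms by (simp add: words_def)

lemma sum_eq_if_eq_off_0:
  fixes x y :: "nat \<Rightarrow> nat"
  assumes "0 < n" "\<And>i. i \<noteq> 0 \<Longrightarrow> x i = y i"
  shows "(\<Sum>i<n. x i) + y 0 = (\<Sum>i<n. y i) + x 0"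
proof -
  have "(\<Sum>i\<in>{..<n} - {0}. x i) = (\<Sum>i\<in>{..<n} - {0}. y i)"
    using assms(2) by (intro sum.cong) auto
  then show ?thesis
    using sum.remove[of "{..<n}" 0 x] sum.remove[of "{..<n}" 0 y] assms(1) by simp
qed

lemma sum_Out_eq:
  assumes "y \<in> Out q n h t x"
  shows "(\<Sum>i<n. y i) = (\<Sum>i<n. x i) + (\<Sum>i<n. y i - x i)"
proof -
  have "\<forall>i<n. x i \<le> y i" using assms by (simp add: Out_def)
  then have "(\<Sum>i<n. y i) = (\<Sum>i<n. x i + (y i - x i))" by (intro sum.cong) auto
  then show ?thesis by (simp add: sum.distrib)
qed

lemma sum_Out_increase_pos:
  assumes "x \<in> words q n" "y \<in> Out q n h t x" "y \<noteq> x"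
  shows "0 < (\<Sum>i<n. y i - x i)"
proof -
  have y: "y \<in> words q n" "\<forall>i<n. x i \<le> y i" using assms(2) by (auto simp: Out_def)
  obtain i where "y i \<noteq> x i" using assms(3) by (auto simp: fun_eq_iff)
  moreover have "i < n" using words_eq_outside[OF assms(1) y(1)] calculation by metis
  ultimately show ?thesis using y(2) by (intro sum_pos2[of _ i]) auto
qed

lemma AED_sum_code: "AED q n h t (sum_code q n t j)"
  unfolding AED_def
proof (intro conjI ballI impI)
  show "sum_code q n t j \<subseteq> words q n" by (auto simp: sum_code_def)
next
  fix x y assume x: "x \<in> sum_code q n t j" and y: "y \<in> Out q n h t x" and "y \<noteq> x"
  have "0 < (\<Sum>i<n. y i - x i)" "(\<Sum>i<n. y i - x i) \<le> t"
    using sum_Out_increase_pos[OF _ y \<open>y \<noteq> x\<close>] x y by (auto simp: sum_code_def Out_def)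
  then have "\<not> (t + 1) dvd (\<Sum>i<n. y i - x i)" by (auto dest: dvd_imp_le)
  then have "(\<Sum>i<n. y i) mod (t + 1) \<noteq> (\<Sum>i<n. x i) mod (t + 1)"
    by (simp add: sum_Out_eq[OF y] mod_eq_dvd_iff_nat)
  then show "y \<notin> sum_code q n t j" using x by (simp add: sum_code_def)
qed

definition round_down0 :: "nat \<Rightarrow> (nat \<Rightarrow> nat) \<Rightarrow> nat \<Rightarrow> nat" where
  "round_down0 m x = x(0 := m * (x 0 div m))"

definition block_words :: "nat \<Rightarrow> nat \<Rightarrow> nat \<Rightarrow> (nat \<Rightarrow> nat) set" where
  "block_words q n m = {x \<in> words q n. m dvd x 0}"

lemma round_down0_eq_iff:
  assumes "0 < m"
  shows "round_down0 m x = round_down0 m y \<longleftrightarrow>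
    (\<forall>i. i \<noteq> 0 \<longrightarrow> x i = y i) \<and> x 0 div m = y 0 div m"
proof -
  have "round_down0 m x = round_down0 m y \<longleftrightarrow>
      (\<forall>i. i \<noteq> 0 \<longrightarrow> x i = y i) \<and> m * (x 0 div m) = m * (y 0 div m)"
    unfolding round_down0_def fun_eq_iff by (metis fun_upd_apply)
  then show ?thesis using assms by simp
qed

lemma round_down0_in_block_words:
  assumes "x \<in> words q n"
  shows "round_down0 m x \<in> block_words q n m"
proof -
  have "0 < n \<Longrightarrow> m * (x 0 div m) < q"
    using assms by (auto simp: words_def intro: le_less_trans[OF times_div_less_eq_dividend])
  then show ?thesis using assms by (auto simp: round_down0_def block_words_def words_def)
qed

lemma finite_block_words: "finite (block_words q n m)"
  using finite_words by (rule rev_finite_subset) (auto simp: block_words_def)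

lemma Out_if_raise_0:
  assumes "x \<in> words q n" "y \<in> words q n" "0 < h" "\<And>i. i \<noteq> 0 \<Longrightarrow> x i = y i"
    and "x 0 \<le> y 0" "y 0 \<le> x 0 + t"
  shows "y \<in> Out q n h t x"
proof -
  have "card {i. i < n \<and> y i \<noteq> x i} \<le> card {0::nat}"
    using assms(4) by (intro card_mono) force+
  then have "card {i. i < n \<and> y i \<noteq> x i} \<le> h" using assms(3) by simp
  moreover have "(\<Sum>i<n. y i - x i) = (\<Sum>i<n. if i = 0 then y 0 - x 0 else 0)"
    using assms(4) by (intro sum.cong) auto
  then have "(\<Sum>i<n. y i - x i) \<le> t" using assms(6) by auto
  moreover have "\<forall>i<n. x i \<le> y i" using assms(4,5) by (metis eq_imp_le)
  ultimately show ?thesis using assms(2) by (simp add: Out_def)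
qed

lemma inj_on_round_down0_AED:
  assumes "AED q n h t D" "0 < h"
  shows "inj_on (round_down0 (t + 1)) D"
proof -
  have "x = y" if xy: "x \<in> D" "y \<in> D" "round_down0 (t + 1) x = round_down0 (t + 1) y"
    and le: "x 0 \<le> y 0" for x y
  proof (rule ccontr)
    assume "x \<noteq> y"
    have off0: "\<And>i. i \<noteq> 0 \<Longrightarrow> x i = y i" and "x 0 div (t + 1) = y 0 div (t + 1)"
      using xy(3) round_down0_eq_iff[of "t + 1" x y] by auto
    then have "y \<in> Out q n h t x"
      using assms xy le by (intro Out_if_raise_0 le_add_if_div_eq) (auto simp: AED_def)
    then show False using assms(1) xy \<open>x \<noteq> y\<close> by (auto simp: AED_def)
  qed
  then show ?thesis by (intro inj_onI) (metis nle_le)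
qed

lemma card_AED_le:
  assumes "AED q n h t D" "0 < h"
  shows "card D \<le> card (block_words q n (t + 1))"
proof -
  have "round_down0 (t + 1) ` D \<subseteq> block_words q n (t + 1)"
    using assms(1) round_down0_in_block_words by (auto simp: AED_def)
  then show ?thesis
    using inj_on_round_down0_AED[OF assms] finite_block_words by (intro card_inj_on_le)
qed

lemma inj_on_round_down0_sum_code:
  assumes "0 < n"
  shows "inj_on (round_down0 (t + 1)) (sum_code q n t j)"
proof
  fix x y assume x: "x \<in> sum_code q n t j" and y: "y \<in> sum_code q n t j"
    and "round_down0 (t + 1) x = round_down0 (t + 1) y"
  then have off0: "\<And>i. i \<noteq> 0 \<Longrightarrow> x i = y i" and div: "x 0 div (t + 1) = y 0 div (t + 1)"
    using round_down0_eq_iff[of "t + 1" x y] by auto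
  have "((\<Sum>i<n. y i) + x 0) mod (t + 1) = ((\<Sum>i<n. x i) + y 0) mod (t + 1)"
    using sum_eq_if_eq_off_0[of n x y, OF assms off0] by simp
  also have "\<dots> = ((\<Sum>i<n. x i) mod (t + 1) + y 0) mod (t + 1)" by (simp add: mod_add_left_eq)
  also have "\<dots> = ((\<Sum>i<n. y i) mod (t + 1) + y 0) mod (t + 1)" using x y by (simp add: sum_code_def)
  also have "\<dots> = ((\<Sum>i<n. y i) + y 0) mod (t + 1)" by (simp add: mod_add_left_eq)
  finally have "((\<Sum>i<n. y i) + x 0) mod (t + 1) = ((\<Sum>i<n. y i) + y 0) mod (t + 1)" .
  then have "x 0 mod (t + 1) = y 0 mod (t + 1)" by (simp add: nat_mod_eq_iff)
  then have "x 0 = y 0" using div div_mult_mod_eq[of "x 0" "t + 1"] div_mult_mod_eq[of "y 0" "t + 1"] by simp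
  show "x = y"
  proof
    fix i show "x i = y i" using off0 \<open>x 0 = y 0\<close> by (cases "i = 0") auto
  qed
qed

text \<open>The preimage of y raises y 0 by the remainder r that makes the coordinate sum
congruent to j; it stays below q because q is a multiple of t + 1.\<close>

lemma block_words_subset_round_down0_sum_code:
  assumes "0 < n" "(t + 1) dvd q" "j \<le> t"
  shows "block_words q n (t + 1) \<subseteq> round_down0 (t + 1) ` sum_code q n t j"
proof
  fix y assume y: "y \<in> block_words q n (t + 1)"
  define r where "r = (j + (t + 1) - (\<Sum>i<n. y i) mod (t + 1)) mod (t + 1)"
  define x where "x = y(0 := y 0 + r)"
  have r: "r < t + 1" by (simp add: r_def)
  have "y 0 < q" using y assms(1) by (simp add: block_words_def words_def)
  then have "y 0 + r < q" using y assms(2) r by (intro add_less_if_dvd) (auto simp: block_words_def)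
  then have "x \<in> words q n" using y assms(1) by (auto simp: x_def block_words_def words_def)
  moreover have "(\<Sum>i<n. x i) = (\<Sum>i<n. y i) + r"
    using sum_eq_if_eq_off_0[OF assms(1), of x y] by (simp add: x_def)
  then have "(\<Sum>i<n. x i) mod (t + 1) = j"
    using mod_add_complement[of j "t + 1"] assms(3) by (simp add: r_def)
  ultimately have "x \<in> sum_code q n t j" by (simp add: sum_code_def)
  moreover have "(t + 1) dvd y 0" using y by (simp add: block_words_def)
  then have "(t + 1) * ((y 0 + r) div (t + 1)) = y 0"
    using r by (simp only: div_add_less_if_dvd dvd_mult_div_cancel)
  then have "round_down0 (t + 1) x = y" by (auto simp: round_down0_def x_def)
  ultimately show "y \<in> round_down0 (t + 1) ` sum_code q n t j" by blast
qed

lemma card_sum_code_eq_block_words: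
  assumes "0 < n" "(t + 1) dvd q" "j \<le> t"
  shows "card (sum_code q n t j) = card (block_words q n (t + 1))"
proof -
  have "round_down0 (t + 1) ` sum_code q n t j = block_words q n (t + 1)"
    using block_words_subset_round_down0_sum_code[OF assms] round_down0_in_block_words
    by (fastforce simp: sum_code_def)
  then show ?thesis using card_image[OF inj_on_round_down0_sum_code[OF assms(1), of t q j]] by simp
qed

lemma words_eq_UN_sum_code: "words q n = (\<Union>j\<le>t. sum_code q n t j)"
  by (auto simp: sum_code_def)

lemma card_words_eq_sum_card_sum_code:
  "card (words q n) = (\<Sum>j\<le>t. card (sum_code q n t j))"
  unfolding words_eq_UN_sum_code[of q n t]
  by (rule card_UN_disjoint) (auto simp: sum_code_def intro: rev_finite_subset[OF finite_words])

theorem theorem4: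
  fixes q n h t j :: nat
  assumes "0 < q" and "0 < n" and "0 < h" and "0 < t" and "h \<le> n"
    and "(t + 1) dvd q" and "j \<le> t"
  shows "optimal_AED q n h t (sum_code q n t j)
         \<and> real (card (sum_code q n t j)) = real q ^ n / real (t + 1)"
proof -
  have card_eq: "card (sum_code q n t j') = card (block_words q n (t + 1))" if "j' \<le> t" for j'
    using card_sum_code_eq_block_words[OF assms(2,6) that] .
  have "optimal_AED q n h t (sum_code q n t j)"
    using AED_sum_code card_AED_le[OF _ assms(3)] card_eq[OF assms(7)]
    by (simp add: optimal_AED_def)
  moreover have "q ^ n = (t + 1) * card (sum_code q n t j)"
    using card_words_eq_sum_card_sum_code[of q n t] card_eq card_eq[OF assms(7)]
    by (simp add: card_words)
  then have "real q ^ n = real (t + 1) * real (card (sum_code q n t j))"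
    by (metis of_nat_mult of_nat_power)
  ultimately show ?thesis by (simp add: field_simps)
qed

end
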